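(* Fix integers $m\ge d\ge 1$ and put $\lambda=d/m$. Let $p$ and $q$ be monic polynomials of degree $d$ all of whose roots are real and nonnegative. Then \[ \mathcal{R}^{d,\lambda}_{\mathbb{S}[p \boxplus_{d,\lambda} q]}(s) = \mathcal{R}^{d,\lambda}_{\mathbb{S}p}(s) +\mathcal{R}^{d,\lambda}_{\mathbb{S}q}(s). \]
   Context: Rectangular finite convolution: for $p(x)=\sum_{i=0}^d(-1)^i a_i x^{d-i}$ and $q(x)=\sum_{i=0}^d(-1)^i b_i x^{d-i}$ define \[ (p\boxplus_{d,\lambda} q)(x)=\sum_{k=0}^d x^{d-k}(-1)^k\sum_{i+j=k}\frac{(d-i)!(d-j)!}{d!(d-k)!}\,\frac{(m-i)!(m-j)!}{m!(m-k)!}\,a_ib_j . \] (When $p=\det(xI_d-A^TA)$, $q=\det(xI_d-B^TB)$ for real $m\times d$ matrices $A,B$, this equals the average of $\det(xI_d-(A+QBR)^T(A+QBR))$ over Haar-distributed $Q\in\mathcal O_m$, $R\in\mathcal O_d$.) For a polynomial $p$ with nonnegative roots, $\mathbb{S}p(x):=p(x^2)$ is its symmetrization. Finite rectangular $R$-transform: for monic $p(x)=\sum_{i=0}^d(-1)^ip_ix^{d-i}$ with nonnegative roots, set \[ E_p(s):=\sum_{i=0}^d (-1)^i (md)^i\frac{(m-i)!(d-i)!}{m!\,d!}\,p_i\,s^i , \] and let $\mathcal{R}^{d,\lambda}_{\mathbb{S}p}(s)$ be the unique polynomial of degree at most $d$ such that $\mathcal{R}^{d,\lambda}_{\mathbb{S}p}(s)\equiv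 -\frac{s}{d}\frac{d}{ds}\log E_p(s)$ modulo $s^{d+1}$ (i.e. the coefficients of $s^0,\dots,s^d$ agree, as formal power series). *)

theory Defs
  imports "HOL-Computational_Algebra.Computational_Algebra"
begin

text \<open>Coefficient convention: p(x) = sum_{i=0}^d (-1)^i a_i x^(d-i), so
  a_i = (-1)^i * coeff p (d - i).\<close>

definition sgn_coeff :: "nat \<Rightarrow> real poly \<Rightarrow> nat \<Rightarrow> real" where
  "sgn_coeff d p i = (-1) ^ i * coeff p (d - i)"

definition rect_conv :: "nat \<Rightarrow> nat \<Rightarrow> real poly \<Rightarrow> real poly \<Rightarrow> real poly" where
  "rect_conv d m p q =
     (\<Sum>k\<le>d. monom ((-1) ^ k *
        (\<Sum>i\<le>k. (fact (d - i) * fact (d - (k - i))) / (fact d * fact (d - k))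
                 * ((fact (m - i) * fact (m - (k - i))) / (fact m * fact (m - k)))
                 * sgn_coeff d p i * sgn_coeff d q (k - i))) (d - k))"

definition symmetrize :: "real poly \<Rightarrow> real poly" where
  "symmetrize p = pcompose p [:0, 0, 1:]"

definition rect_E :: "nat \<Rightarrow> nat \<Rightarrow> real poly \<Rightarrow> real fps" where
  "rect_E d m p = Abs_fps (\<lambda>i. if i \<le> d then
       (-1) ^ i * (real m * real d) ^ i * (fact (m - i) * fact (d - i)) / (fact m * fact d)
       * sgn_coeff d p i else 0)"

text \<open>Finite rectangular R-transform of S p: the unique polynomial of degree at most d
  agreeing with -(s/d) (d/ds) log E_p(s) = -(s/d) E_p'(s)/E_p(s) in the coefficients of
  s^0, ..., s^d.\<close>

definition rect_R :: "nat \<Rightarrow> nat \<Rightarrow> real poly \<Rightarrow> real poly" where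
  "rect_R d m p =
     (let F = - fps_const (1 / real d) * fps_X * fps_deriv (rect_E d m p) * inverse (rect_E d m p)
      in (\<Sum>i\<le>d. monom (fps_nth F i) i))"

definition monic_nonneg_rooted :: "nat \<Rightarrow> real poly \<Rightarrow> bool" where
  "monic_nonneg_rooted d p \<longleftrightarrow> degree p = d \<and> lead_coeff p = 1 \<and>
     (\<forall>z. poly (map_poly complex_of_real p) z = 0 \<longrightarrow> Im z = 0 \<and> Re z \<ge> 0)"

end

theory Submission
  imports Defs
begin

text \<open>The series E turns the rectangular convolution into multiplication: the coefficient
  weights w_k of E satisfy w_(i+j) c_(i,j) = w_i w_j for the coefficients c_(i,j) defining
  the convolution, so E of the convolution of p and q agrees with the product of E_p and E_q
  up to order d. The map f \<mapsto> s f'/f turns products into sums and, on series with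
  nonzero constant term, respects congruence modulo s^(d+1); the R-transform is its truncation
  to degree d.\<close>

lemma fps_X_power_dvd_iff:
  fixes f :: "'a::comm_ring_1 fps"
  shows "fps_X ^ n dvd f \<longleftrightarrow> (\<forall>i<n. f $ i = 0)"
proof
  assume "fps_X ^ n dvd f"
  then obtain g where "f = fps_X ^ n * g" by (elim dvdE)
  then show "\<forall>i<n. f $ i = 0" by (simp add: fps_X_power_mult_nth)
next
  assume "\<forall>i<n. f $ i = 0"
  then have "fps_cutoff n f = 0" by (simp add: fps_eq_iff)
  then have "f = fps_X ^ n * fps_shift n f" using fps_shift_cutoff'[of n f] by simp
  then show "fps_X ^ n dvd f" by (metis dvd_triv_left)
qed

lemma truncate_fps_eq_iff:
  fixes f g :: "'a::comm_ring_1 fps"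
  shows "truncate_fps n f = truncate_fps n g \<longleftrightarrow> fps_X ^ n dvd f - g"
proof -
  have "truncate_fps n f = truncate_fps n g \<longleftrightarrow> truncate_fps n (f - g) = 0"
    by (simp add: truncate_fps_diff)
  also have "\<dots> \<longleftrightarrow> (\<forall>i<n. (f - g) $ i = 0)"
    by (auto simp: poly_eq_iff coeff_truncate_fps)
  finally show ?thesis by (simp add: fps_X_power_dvd_iff)
qed

lemma fps_X_mult_deriv_nth: "(fps_X * fps_deriv f) $ n = of_nat n * f $ n"
  by (cases n) simp_all

lemma fps_X_power_dvd_X_mult_deriv:
  fixes f :: "'a::comm_ring_1 fps"
  assumes "fps_X ^ n dvd f"
  shows "fps_X ^ n dvd fps_X * fps_deriv f"
  using assms by (simp add: fps_X_power_dvd_iff fps_X_mult_deriv_nth)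

definition fps_X_logderiv :: "'a::field fps \<Rightarrow> 'a fps" where
  "fps_X_logderiv f = fps_X * fps_deriv f * inverse f"

lemma fps_X_logderiv_mult:
  fixes f g :: "'a::field fps"
  assumes "f $ 0 \<noteq> 0" "g $ 0 \<noteq> 0"
  shows "fps_X_logderiv (f * g) = fps_X_logderiv f + fps_X_logderiv g"
proof -
  have "fps_X_logderiv (f * g) =
      fps_X_logderiv f * (g * inverse g) + fps_X_logderiv g * (f * inverse f)"
    using assms by (simp add: fps_X_logderiv_def fps_inverse_mult algebra_simps)
  also have "\<dots> = fps_X_logderiv f + fps_X_logderiv g"
    using assms by (simp add: inverse_mult_eq_1')
  finally show ?thesis .
qed

lemma fps_X_logderiv_cong:
  fixes f g :: "'a::field fps"
  assumes "f $ 0 \<noteq> 0" "g $ 0 \<noteq> 0" and "fps_X ^ n dvd f - g"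
  shows "fps_X ^ n dvd fps_X_logderiv f - fps_X_logderiv g"
proof -
  have inverse_diff: "inverse f - inverse g = inverse f * inverse g * (g - f)"
    using assms(1,2) by (simp add: algebra_simps inverse_mult_eq_1 inverse_mult_eq_1')
  have "fps_X_logderiv f - fps_X_logderiv g =
      fps_X * fps_deriv (f - g) * inverse f + fps_X * fps_deriv g * (inverse f - inverse g)"
    by (simp add: fps_X_logderiv_def algebra_simps)
  also have "\<dots> = fps_X * fps_deriv (f - g) * inverse f
      + fps_X * fps_deriv g * inverse f * inverse g * (g - f)"
    by (simp add: inverse_diff mult.assoc)
  moreover have "fps_X ^ n dvd fps_X * fps_deriv (f - g)"
    using assms(3) by (rule fps_X_power_dvd_X_mult_deriv)
  moreover have "fps_X ^ n dvd g - f"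
    using assms(3) by (metis dvd_minus_iff minus_diff_eq)
  ultimately show ?thesis
    by (metis dvd_add dvd_mult dvd_mult2)
qed

definition rect_weight :: "nat \<Rightarrow> nat \<Rightarrow> nat \<Rightarrow> real" where
  "rect_weight d m i =
     (-1) ^ i * (real m * real d) ^ i * (fact (m - i) * fact (d - i)) / (fact m * fact d)"

lemma rect_E_nth:
  "rect_E d m p $ i = (if i \<le> d then rect_weight d m i * sgn_coeff d p i else 0)"
  by (simp add: rect_E_def rect_weight_def)

lemma rect_E_nth_0:
  assumes "coeff p d = 1"
  shows "rect_E d m p $ 0 = 1"
  using assms by (simp add: rect_E_nth rect_weight_def sgn_coeff_def)

lemma sgn_coeff_rect_conv:
  assumes "k \<le> d"
  shows "sgn_coeff d (rect_conv d m p q) k =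
     (\<Sum>i\<le>k. (fact (d - i) * fact (d - (k - i))) / (fact d * fact (d - k))
              * ((fact (m - i) * fact (m - (k - i))) / (fact m * fact (m - k)))
              * sgn_coeff d p i * sgn_coeff d q (k - i))"
    (is "_ = ?c k")
proof -
  have "coeff (rect_conv d m p q) (d - k) = (\<Sum>j\<le>d. if j = k then (-1) ^ j * ?c j else 0)"
    unfolding rect_conv_def coeff_sum coeff_monom
    by (intro sum.cong) (use assms in auto)
  also have "\<dots> = (-1) ^ k * ?c k"
    using assms by simp
  finally show ?thesis
    by (simp add: sgn_coeff_def[of d "rect_conv d m p q"] flip: power_mult_distrib)
qed

lemma rect_weight_mult:
  assumes "i \<le> k"
  shows "rect_weight d m k * ((fact (d - i) * fact (d - (k - i))) / (fact d * fact (d - k))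
           * ((fact (m - i) * fact (m - (k - i))) / (fact m * fact (m - k))))
         = rect_weight d m i * rect_weight d m (k - i)"
proof -
  have "(-1::real) ^ k = (-1) ^ i * (-1) ^ (k - i)"
    "(real m * real d) ^ k = (real m * real d) ^ i * (real m * real d) ^ (k - i)"
    using assms by (simp_all flip: power_add)
  then show ?thesis
    by (simp add: rect_weight_def field_simps)
qed

lemma rect_E_rect_conv:
  "fps_X ^ Suc d dvd rect_E d m (rect_conv d m p q) - rect_E d m p * rect_E d m q"
proof -
  have "rect_E d m (rect_conv d m p q) $ k = (rect_E d m p * rect_E d m q) $ k" if "k \<le> d" for k
  proof -
    have "rect_E d m (rect_conv d m p q) $ k
        = (\<Sum>i\<le>k. rect_weight d m k
            * ((fact (d - i) * fact (d - (k - i))) / (fact d * fact (d - k))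
               * ((fact (m - i) * fact (m - (k - i))) / (fact m * fact (m - k))))
            * sgn_coeff d p i * sgn_coeff d q (k - i))"
      using that by (simp add: rect_E_nth sgn_coeff_rect_conv sum_distrib_left mult.assoc)
    also have "\<dots> = (\<Sum>i\<le>k. (rect_weight d m i * sgn_coeff d p i)
                           * (rect_weight d m (k - i) * sgn_coeff d q (k - i)))"
      by (intro sum.cong refl) (subst rect_weight_mult; simp add: ac_simps)
    also have "\<dots> = (rect_E d m p * rect_E d m q) $ k"
      unfolding fps_mult_nth atLeast0AtMost rect_E_nth
      by (intro sum.cong refl) (use that in auto)
    finally show ?thesis .
  qed
  then show ?thesis
    unfolding fps_X_power_dvd_iff by (simp add: less_Suc_eq_le)
qed

lemma rect_R_eq_truncate_fps:
  "rect_R d m p = truncate_fps (Suc d) (- fps_const (1 / real d) * fps_X_logderiv (rect_E d m p))"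
  by (rule poly_eqI)
    (simp add: rect_R_def fps_X_logderiv_def coeff_sum coeff_truncate_fps mult.assoc)

theorem mainTheorem1:
  fixes d m :: nat and p q :: "real poly"
  assumes "1 \<le> d" and "d \<le> m"
    and "monic_nonneg_rooted d p" and "monic_nonneg_rooted d q"
  shows "rect_R d m (rect_conv d m p q) = rect_R d m p + rect_R d m q"
proof -
  define c where "c = - fps_const (1 / real d)"
  define E where "E = rect_E d m"
  have E_p: "E p $ 0 = 1" and E_q: "E q $ 0 = 1"
    using assms(3,4) by (auto simp: E_def monic_nonneg_rooted_def intro: rect_E_nth_0)
  have conv: "fps_X ^ Suc d dvd E (rect_conv d m p q) - E p * E q"
    unfolding E_def by (rule rect_E_rect_conv)
  then have "(E (rect_conv d m p q) - E p * E q) $ 0 = 0"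
    unfolding fps_X_power_dvd_iff by blast
  then have "E (rect_conv d m p q) $ 0 = 1"
    using E_p E_q by simp
  with conv E_p E_q have
    "fps_X ^ Suc d dvd fps_X_logderiv (E (rect_conv d m p q)) - fps_X_logderiv (E p * E q)"
    by (intro fps_X_logderiv_cong) simp_all
  then have "fps_X ^ Suc d dvd
      c * fps_X_logderiv (E (rect_conv d m p q)) - c * fps_X_logderiv (E p * E q)"
    by (metis dvd_mult right_diff_distrib)
  then have "rect_R d m (rect_conv d m p q) = truncate_fps (Suc d) (c * fps_X_logderiv (E p * E q))"
    by (simp add: rect_R_eq_truncate_fps E_def c_def truncate_fps_eq_iff)
  also have "\<dots> = truncate_fps (Suc d) (c * fps_X_logderiv (E p) + c * fps_X_logderiv (E q))"
    using E_p E_q by (simp add: fps_X_logderiv_mult distrib_left)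
  also have "\<dots> = rect_R d m p + rect_R d m q"
    by (simp add: rect_R_eq_truncate_fps E_def c_def truncate_fps_add)
  finally show ?thesis .
qed

end
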